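(* Let $\underline M=(M,\lambda,\mu)$ be a free metabolic extended quadratic form over an abelian group $Q$ and $L\le M$ a lagrangian. Then there is an isomorphism $J:\underline M\to-\underline M$ with $J|_L=\mathrm{id}_L$.
   Context: Extended quadratic form over $Q$: $(M,\lambda,\mu)$, $\lambda$ symmetric bilinear to $\mathbb Z$, $\mu:M\to Q$ homomorphism; isomorphisms preserve $\lambda$ and $\mu$. $-\underline M=(M,-\lambda,-\mu)$. Free: $M$ free. Metabolic: $\mathrm{ad}\lambda:M\to\mathrm{Hom}(M,\mathbb Z)$ is an isomorphism (free case) and there is a lagrangian, i.e. a direct summand $L$ of half rank with $\lambda|_{L\times L}=0$ and $\mu|_L=0$. *)

theory Defs
  imports Main "HOL-Library.Function_Algebras"
begin

text \<open>A free abelian group of finite rank n is modelled (up to isomorphism) as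
  the group Z^n, realised as integer sequences vanishing from index n on.\<close>

definition Zn :: "nat \<Rightarrow> (nat \<Rightarrow> int) set" where
  "Zn n = {v. \<forall>i\<ge>n. v i = 0}"

definition zsmul :: "int \<Rightarrow> (nat \<Rightarrow> int) \<Rightarrow> (nat \<Rightarrow> int)" where
  "zsmul c v = (\<lambda>i. c * v i)"

definition additive_on :: "(nat \<Rightarrow> int) set \<Rightarrow> ((nat \<Rightarrow> int) \<Rightarrow> 'b::ab_group_add) \<Rightarrow> bool" where
  "additive_on M f \<longleftrightarrow> (\<forall>x\<in>M. \<forall>y\<in>M. f (x + y) = f x + f y)"

definition subgroup_of :: "(nat \<Rightarrow> int) set \<Rightarrow> (nat \<Rightarrow> int) set \<Rightarrow> bool" where
  "subgroup_of L M \<longleftrightarrow> L \<subseteq> M \<and> 0 \<in> L \<and> (\<forall>x\<in>L. \<forall>y\<in>L. x + y \<in> L \<and> - x \<in> L)"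

definition ext_quad_form :: "nat \<Rightarrow> ((nat \<Rightarrow> int) \<Rightarrow> (nat \<Rightarrow> int) \<Rightarrow> int) \<Rightarrow> ((nat \<Rightarrow> int) \<Rightarrow> 'q::ab_group_add) \<Rightarrow> bool" where
  "ext_quad_form n lam mu \<longleftrightarrow>
     (\<forall>x\<in>Zn n. \<forall>y\<in>Zn n. lam x y = lam y x) \<and>
     (\<forall>y\<in>Zn n. additive_on (Zn n) (\<lambda>x. lam x y)) \<and>
     additive_on (Zn n) mu"

text \<open>ad lambda : M \<rightarrow> Hom(M,Z) is an isomorphism: every homomorphism M \<rightarrow> Z is
  lambda(x,-) for exactly one x in M.\<close>
definition ad_iso :: "nat \<Rightarrow> ((nat \<Rightarrow> int) \<Rightarrow> (nat \<Rightarrow> int) \<Rightarrow> int) \<Rightarrow> bool" where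
  "ad_iso n lam \<longleftrightarrow>
     (\<forall>f. additive_on (Zn n) f \<longrightarrow> (\<exists>!x\<in>Zn n. \<forall>y\<in>Zn n. lam x y = f y))"

definition zbasis :: "(nat \<Rightarrow> int) set \<Rightarrow> (nat \<Rightarrow> int) set \<Rightarrow> bool" where
  "zbasis B L \<longleftrightarrow> finite B \<and> B \<subseteq> L \<and>
     (\<forall>c. (\<Sum>b\<in>B. zsmul (c b) b) = 0 \<longrightarrow> (\<forall>b\<in>B. c b = 0)) \<and>
     (\<forall>x\<in>L. \<exists>c. x = (\<Sum>b\<in>B. zsmul (c b) b))"

definition direct_summand :: "nat \<Rightarrow> (nat \<Rightarrow> int) set \<Rightarrow> bool" where
  "direct_summand n L \<longleftrightarrow> subgroup_of L (Zn n) \<and>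
     (\<exists>K. subgroup_of K (Zn n) \<and> L \<inter> K = {0} \<and>
          (\<forall>x\<in>Zn n. \<exists>l\<in>L. \<exists>k\<in>K. x = l + k))"

definition lagrangian :: "nat \<Rightarrow> ((nat \<Rightarrow> int) \<Rightarrow> (nat \<Rightarrow> int) \<Rightarrow> int) \<Rightarrow> ((nat \<Rightarrow> int) \<Rightarrow> 'q::ab_group_add) \<Rightarrow> (nat \<Rightarrow> int) set \<Rightarrow> bool" where
  "lagrangian n lam mu L \<longleftrightarrow> direct_summand n L \<and>
     (\<exists>B. zbasis B L \<and> 2 * card B = n) \<and>
     (\<forall>x\<in>L. \<forall>y\<in>L. lam x y = 0) \<and> (\<forall>x\<in>L. mu x = 0)"

definition metabolic :: "nat \<Rightarrow> ((nat \<Rightarrow> int) \<Rightarrow> (nat \<Rightarrow> int) \<Rightarrow> int) \<Rightarrow> ((nat \<Rightarrow> int) \<Rightarrow> 'q::ab_group_add) \<Rightarrow> bool" where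
  "metabolic n lam mu \<longleftrightarrow> ad_iso n lam \<and> (\<exists>L. lagrangian n lam mu L)"

definition eqf_iso :: "nat \<Rightarrow> ((nat \<Rightarrow> int) \<Rightarrow> (nat \<Rightarrow> int) \<Rightarrow> int) \<Rightarrow> ((nat \<Rightarrow> int) \<Rightarrow> 'q::ab_group_add)
    \<Rightarrow> ((nat \<Rightarrow> int) \<Rightarrow> (nat \<Rightarrow> int) \<Rightarrow> int) \<Rightarrow> ((nat \<Rightarrow> int) \<Rightarrow> 'q) \<Rightarrow> ((nat \<Rightarrow> int) \<Rightarrow> (nat \<Rightarrow> int)) \<Rightarrow> bool" where
  "eqf_iso n lam mu lam' mu' J \<longleftrightarrow>
     bij_betw J (Zn n) (Zn n) \<and> additive_on (Zn n) J \<and>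
     (\<forall>x\<in>Zn n. \<forall>y\<in>Zn n. lam' (J x) (J y) = lam x y) \<and>
     (\<forall>x\<in>Zn n. mu' (J x) = mu x)"

end

theory Submission
  imports Defs
begin

(* Choose a complement K of the lagrangian L and write x = a + k with a in L, k in K.
   Since lambda is unimodular and L is a half-rank direct summand, L is its own orthogonal:
   a basis of L has a dual basis inside K, and a nonzero k in K orthogonal to L would make the
   basis of L, its dual basis and k into n + 1 independent vectors of Z^n.  Hence the form
   lambda(k_x, k_y) is represented by a homomorphism G : M -> L, and J(a + k) = a - k + G(x) is
   the required isomorphism: expanding lambda(J x, J y), every term with two factors in L
   vanishes and lambda(G x, k_y) = lambda(k_x, G y) = lambda(k_x, k_y) turns the sum into
   -lambda(x, y); as mu vanishes on L, mu(J x) = -mu(k) = -mu(x). *)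

lemma zsmul_apply: "zsmul c v i = c * v i"
  by (simp add: zsmul_def)

lemma sum_fun_apply: "sum f A x = (\<Sum>a\<in>A. f a x)"
  by (induct A rule: infinite_finite_induct) auto

lemmas fun_apply_simps = zsmul_apply sum_fun_apply

lemma zsmul_0_left [simp]: "zsmul 0 x = 0"
  and zsmul_1_left [simp]: "zsmul 1 x = x"
  by (simp_all add: fun_eq_iff zsmul_apply)

lemma zsmul_of_nat: "zsmul (int m) x = (\<Sum>i<m. x)"
  by (induct m) (simp_all add: fun_eq_iff zsmul_apply algebra_simps)

lemma zsmul_uminus: "zsmul (- c) x = - zsmul c x"
  by (simp add: fun_eq_iff zsmul_apply)

lemma zsmul_cases:
  obtains m :: nat where "c = int m" "zsmul c x = (\<Sum>i<m. x)"
  | m :: nat where "c = - int m" "zsmul c x = - (\<Sum>i<m. x)"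
proof (cases "c \<ge> 0")
  case True
  then have "c = int (nat c)" by simp
  moreover from this have "zsmul c x = (\<Sum>i<nat c. x)" by (metis zsmul_of_nat)
  ultimately show thesis by (rule that(1))
next
  case False
  then have "c = - int (nat (- c))" by simp
  moreover from this have "zsmul c x = - (\<Sum>i<nat (- c). x)" by (metis zsmul_of_nat zsmul_uminus)
  ultimately show thesis by (rule that(2))
qed

lemma Zn_0 [simp]: "0 \<in> Zn n"
  and Zn_add [simp]: "x \<in> Zn n \<Longrightarrow> y \<in> Zn n \<Longrightarrow> x + y \<in> Zn n"
  and Zn_diff [simp]: "x \<in> Zn n \<Longrightarrow> y \<in> Zn n \<Longrightarrow> x - y \<in> Zn n"
  and Zn_uminus [simp]: "x \<in> Zn n \<Longrightarrow> - x \<in> Zn n"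
  and Zn_zsmul [simp]: "x \<in> Zn n \<Longrightarrow> zsmul c x \<in> Zn n"
  and Zn_sum [simp]: "(\<And>a. a \<in> A \<Longrightarrow> w a \<in> Zn n) \<Longrightarrow> sum w A \<in> Zn n"
  by (simp_all add: Zn_def fun_apply_simps)

lemma Zn_SucD: "v \<in> Zn (Suc n) \<Longrightarrow> v n = 0 \<Longrightarrow> v \<in> Zn n"
  by (auto simp: Zn_def) (metis Suc_leI le_neq_implies_less)

lemma Zn_linearly_dependent_pointwise:
  assumes "finite I" "n < card I" "\<And>i. i \<in> I \<Longrightarrow> v i \<in> Zn n"
  shows "\<exists>c. (\<forall>t. (\<Sum>i\<in>I. c i * v i t) = 0) \<and> (\<exists>i\<in>I. c i \<noteq> 0)"
  using assms
proof (induction n arbitrary: I v)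
  case 0
  then obtain i where "i \<in> I" by fastforce
  moreover have "v i t = 0" if "i \<in> I" for i t
    using "0.prems"(3)[OF that] by (simp add: Zn_def)
  ultimately show ?case
    by (intro exI[of _ "\<lambda>_. 1"]) auto
next
  case (Suc n)
  show ?case
  proof (cases "\<forall>i\<in>I. v i n = 0")
    case True
    then have "v i \<in> Zn n" if "i \<in> I" for i
      using Suc.prems(3) that by (blast intro: Zn_SucD)
    moreover have "n < card I"
      using Suc.prems(2) by simp
    ultimately show ?thesis
      using Suc.IH[of I v] Suc.prems(1) by blast
  next
    case False
    then obtain j where j: "j \<in> I" "v j n \<noteq> 0" by auto
    \<comment> \<open>Gaussian elimination of the last coordinate against the pivot vector \<open>v j\<close>.\<close>
    define w where "w i = (\<lambda>t. v j n * v i t - v i n * v j t)" for i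
    have wZ: "w i \<in> Zn n" if "i \<in> I" for i
    proof (rule Zn_SucD)
      show "w i \<in> Zn (Suc n)"
        using that j Suc.prems(3) by (simp add: w_def Zn_def)
      show "w i n = 0"
        by (simp add: w_def)
    qed
    have "\<exists>c. (\<forall>t. (\<Sum>i\<in>I - {j}. c i * w i t) = 0) \<and> (\<exists>i\<in>I - {j}. c i \<noteq> 0)"
      using Suc.prems(1,2) j wZ by (intro Suc.IH) auto
    then obtain c where c: "\<forall>t. (\<Sum>i\<in>I - {j}. c i * w i t) = 0" "\<exists>i\<in>I - {j}. c i \<noteq> 0"
      by blast
    define c' where
      "c' i = (if i = j then - (\<Sum>i\<in>I - {j}. c i * v i n) else c i * v j n)" for i
    have "(\<Sum>i\<in>I. c' i * v i t) = 0" for t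
    proof -
      have "(\<Sum>i\<in>I. c' i * v i t) = c' j * v j t + (\<Sum>i\<in>I - {j}. c' i * v i t)"
        using j Suc.prems(1) by (simp add: sum.remove)
      also have "\<dots> = (\<Sum>i\<in>I - {j}. c i * w i t)"
        by (simp add: c'_def w_def sum_distrib_left sum_distrib_right sum_subtractf[symmetric]
            algebra_simps)
      finally show ?thesis
        using c(1) by simp
    qed
    moreover have "\<exists>i\<in>I. c' i \<noteq> 0"
      using c(2) j by (auto simp: c'_def)
    ultimately show ?thesis by blast
  qed
qed

lemma Zn_linearly_dependent:
  assumes "finite I" "n < card I" "\<And>i. i \<in> I \<Longrightarrow> v i \<in> Zn n"
  obtains c where "(\<Sum>i\<in>I. zsmul (c i) (v i)) = 0" "\<exists>i\<in>I. c i \<noteq> 0"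
proof -
  obtain c where c: "\<forall>t. (\<Sum>i\<in>I. c i * v i t) = 0" "\<exists>i\<in>I. c i \<noteq> 0"
    using Zn_linearly_dependent_pointwise[of I n v, OF assms] by blast
  have "(\<Sum>i\<in>I. zsmul (c i) (v i)) = 0"
    using c(1) by (simp add: fun_eq_iff fun_apply_simps)
  then show thesis
    using c(2) by (rule that)
qed

lemma sum_zsmul_diff:
  "(\<Sum>b\<in>B. zsmul (c b - d b) (w b)) = (\<Sum>b\<in>B. zsmul (c b) (w b)) - (\<Sum>b\<in>B. zsmul (d b) (w b))"
  by (simp add: fun_eq_iff fun_apply_simps sum_subtractf left_diff_distrib)

lemma sum_zsmul_add:
  "(\<Sum>b\<in>B. zsmul (c b + d b) (w b)) = (\<Sum>b\<in>B. zsmul (c b) (w b)) + (\<Sum>b\<in>B. zsmul (d b) (w b))"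
  by (simp add: fun_eq_iff fun_apply_simps sum.distrib distrib_right)

lemma subgroup_of_subset: "subgroup_of S M \<Longrightarrow> x \<in> S \<Longrightarrow> x \<in> M"
  and subgroup_of_zero: "subgroup_of S M \<Longrightarrow> 0 \<in> S"
  and subgroup_of_add: "subgroup_of S M \<Longrightarrow> x \<in> S \<Longrightarrow> y \<in> S \<Longrightarrow> x + y \<in> S"
  and subgroup_of_uminus: "subgroup_of S M \<Longrightarrow> x \<in> S \<Longrightarrow> - x \<in> S"
  unfolding subgroup_of_def by blast+

lemma subgroup_of_diff: "subgroup_of S M \<Longrightarrow> x \<in> S \<Longrightarrow> y \<in> S \<Longrightarrow> x - y \<in> S"
  using subgroup_of_add[of S M x "- y"] subgroup_of_uminus[of S M y] by simp

lemma subgroup_of_sum: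
  "subgroup_of S M \<Longrightarrow> (\<And>a. a \<in> A \<Longrightarrow> w a \<in> S) \<Longrightarrow> sum w A \<in> S"
  by (induct A rule: infinite_finite_induct) (auto intro: subgroup_of_zero subgroup_of_add)

lemma subgroup_of_zsmul:
  assumes "subgroup_of S M" "x \<in> S"
  shows "zsmul c x \<in> S"
  using assms subgroup_of_sum[OF assms(1), where w = "\<lambda>_. x"]
  by (cases c x rule: zsmul_cases) (auto intro: subgroup_of_uminus simp del: sum_constant)

lemma subgroup_of_Zn: "subgroup_of (Zn n) (Zn n)"
  by (simp add: subgroup_of_def)

lemma additive_on_add: "additive_on M f \<Longrightarrow> x \<in> M \<Longrightarrow> y \<in> M \<Longrightarrow> f (x + y) = f x + f y"
  unfolding additive_on_def by blast

context
  fixes S M :: "(nat \<Rightarrow> int) set" and f :: "(nat \<Rightarrow> int) \<Rightarrow> 'b::ab_group_add"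
  assumes subgroup: "subgroup_of S M" and additive: "additive_on S f"
begin

lemma additive_on_zero: "f 0 = 0"
  using additive_on_add[OF additive, of 0 0] subgroup_of_zero[OF subgroup] by simp

lemma additive_on_uminus: "x \<in> S \<Longrightarrow> f (- x) = - f x"
  using additive_on_add[OF additive, of x "- x"] additive_on_zero subgroup_of_uminus[OF subgroup]
  by (simp add: eq_neg_iff_add_eq_0 add.commute)

lemma additive_on_diff: "x \<in> S \<Longrightarrow> y \<in> S \<Longrightarrow> f (x - y) = f x - f y"
  using additive_on_add[OF additive, of x "- y"] additive_on_uminus[of y]
    subgroup_of_uminus[OF subgroup, of y] by simp

lemma additive_on_sum: "(\<And>a. a \<in> A \<Longrightarrow> w a \<in> S) \<Longrightarrow> f (sum w A) = (\<Sum>a\<in>A. f (w a))"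
proof (induct A rule: infinite_finite_induct)
  case (insert a A)
  have "f (sum w (insert a A)) = f (w a + sum w A)"
    by (simp only: sum.insert[OF insert.hyps(1,2)])
  also have "\<dots> = f (w a) + f (sum w A)"
    using insert.prems subgroup_of_sum[OF subgroup, where w = w and A = A]
    by (intro additive_on_add[OF additive]) auto
  also have "\<dots> = f (w a) + (\<Sum>a\<in>A. f (w a))"
    by (subst insert.hyps(3)) (use insert.prems in auto)
  finally show ?case
    by (simp only: sum.insert[OF insert.hyps(1,2)])
qed (simp_all add: additive_on_zero)

end

lemma additive_on_zsmul:
  fixes f :: "(nat \<Rightarrow> int) \<Rightarrow> int"
  assumes S: "subgroup_of S M" and f: "additive_on S f" and x: "x \<in> S"
  shows "f (zsmul c x) = c * f x"
proof -
  have sum_x: "f (\<Sum>i<m. x) = int m * f x" for m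
    using additive_on_sum[OF S f, where w = "\<lambda>_. x" and A = "{..<m}"] x by simp
  show ?thesis
  proof (cases c x rule: zsmul_cases)
    case (2 m)
    then show ?thesis
      using additive_on_uminus[OF S f] subgroup_of_sum[OF S, where w = "\<lambda>_. x" and A = "{..<m}"] x
        sum_x[of m] by (simp del: sum_constant)
  qed (simp add: sum_x del: sum_constant)
qed

lemma zbasis_coordinates:
  assumes basis: "zbasis B L" and L: "subgroup_of L M"
  obtains \<phi> :: "(nat \<Rightarrow> int) \<Rightarrow> (nat \<Rightarrow> int) \<Rightarrow> int"
  where "\<And>b. b \<in> B \<Longrightarrow> additive_on L (\<phi> b)"
    and "\<And>b b'. b \<in> B \<Longrightarrow> b' \<in> B \<Longrightarrow> \<phi> b b' = (if b = b' then 1 else 0)"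
proof -
  have finB: "finite B" and BL: "B \<subseteq> L"
    and indep: "\<And>c. (\<Sum>b\<in>B. zsmul (c b) b) = 0 \<Longrightarrow> \<forall>b\<in>B. c b = 0"
    and span: "\<And>x. x \<in> L \<Longrightarrow> \<exists>c. x = (\<Sum>b\<in>B. zsmul (c b) b)"
    using basis unfolding zbasis_def by blast+
  have unique: "c b = d b"
    if "(\<Sum>b\<in>B. zsmul (c b) b) = (\<Sum>b\<in>B. zsmul (d b) b)" "b \<in> B" for c d b
    using indep[of "\<lambda>b. c b - d b"] that by (simp add: sum_zsmul_diff)
  define coord where "coord x = (SOME c. x = (\<Sum>b\<in>B. zsmul (c b) b))" for x
  have coord: "(\<Sum>b\<in>B. zsmul (coord x b) b) = x" if "x \<in> L" for x
    unfolding coord_def using someI_ex[OF span[OF that]] by simp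
  show thesis
  proof (rule that[of "\<lambda>b x. coord x b"])
    show "additive_on L (\<lambda>x. coord x b)" if "b \<in> B" for b
      unfolding additive_on_def
    proof (intro ballI)
      fix x y assume "x \<in> L" "y \<in> L"
      then have "(\<Sum>b\<in>B. zsmul (coord (x + y) b) b) = (\<Sum>b\<in>B. zsmul (coord x b + coord y b) b)"
        unfolding sum_zsmul_add using coord subgroup_of_add[OF L] by simp
      then show "coord (x + y) b = coord x b + coord y b"
        using \<open>b \<in> B\<close> by (rule unique)
    qed
  next
    fix b b' assume "b \<in> B" "b' \<in> B"
    have "(\<Sum>b\<in>B. zsmul (if b = b' then 1 else 0) b) = b'"
      using \<open>b' \<in> B\<close> finB by (simp add: if_distrib[of "\<lambda>c. zsmul c _"] cong: if_cong)
    then have "(\<Sum>b\<in>B. zsmul (coord b' b) b) = (\<Sum>b\<in>B. zsmul (if b = b' then 1 else 0) b)"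
      using coord \<open>b' \<in> B\<close> BL by auto
    then show "coord b' b = (if b = b' then 1 else 0)"
      using \<open>b \<in> B\<close>
      by (rule unique[where c = "\<lambda>b. coord b' b" and d = "\<lambda>b. if b = b' then 1 else 0"])
  qed
qed

locale lagrangian_complement =
  fixes n :: nat
    and lam :: "(nat \<Rightarrow> int) \<Rightarrow> (nat \<Rightarrow> int) \<Rightarrow> int"
    and mu :: "(nat \<Rightarrow> int) \<Rightarrow> 'q::ab_group_add"
    and L K :: "(nat \<Rightarrow> int) set"
  assumes form: "ext_quad_form n lam mu"
    and unimodular: "ad_iso n lam"
    and lagrangian: "lagrangian n lam mu L"
    and K_subgroup: "subgroup_of K (Zn n)"
    and L_inter_K: "L \<inter> K = {0}"
    and L_plus_K: "\<And>x. x \<in> Zn n \<Longrightarrow> \<exists>l\<in>L. \<exists>k\<in>K. x = l + k"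
begin

lemma L_subgroup: "subgroup_of L (Zn n)"
  using lagrangian unfolding lagrangian_def direct_summand_def by blast

lemma lam_L: "x \<in> L \<Longrightarrow> y \<in> L \<Longrightarrow> lam x y = 0"
  and mu_L: "x \<in> L \<Longrightarrow> mu x = 0"
  using lagrangian unfolding lagrangian_def by blast+

lemma L_Zn [simp]: "x \<in> L \<Longrightarrow> x \<in> Zn n"
  and K_Zn [simp]: "x \<in> K \<Longrightarrow> x \<in> Zn n"
  using subgroup_of_subset[OF L_subgroup] subgroup_of_subset[OF K_subgroup] by blast+

lemma lam_sym: "x \<in> Zn n \<Longrightarrow> y \<in> Zn n \<Longrightarrow> lam x y = lam y x"
  and lam_additive_left: "y \<in> Zn n \<Longrightarrow> additive_on (Zn n) (\<lambda>x. lam x y)"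
  and mu_additive: "additive_on (Zn n) mu"
  using form unfolding ext_quad_form_def by blast+

lemma lam_additive_right: "x \<in> Zn n \<Longrightarrow> additive_on (Zn n) (lam x)"
  using lam_additive_left[of x] lam_sym unfolding additive_on_def by simp

lemma lam_add_left [simp]:
    "x \<in> Zn n \<Longrightarrow> y \<in> Zn n \<Longrightarrow> z \<in> Zn n \<Longrightarrow> lam (x + y) z = lam x z + lam y z"
  and lam_diff_left [simp]:
    "x \<in> Zn n \<Longrightarrow> y \<in> Zn n \<Longrightarrow> z \<in> Zn n \<Longrightarrow> lam (x - y) z = lam x z - lam y z"
  and lam_uminus_left [simp]: "x \<in> Zn n \<Longrightarrow> z \<in> Zn n \<Longrightarrow> lam (- x) z = - lam x z"
  and lam_zero_left [simp]: "z \<in> Zn n \<Longrightarrow> lam 0 z = 0"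
  using additive_on_add[OF lam_additive_left] additive_on_diff[OF subgroup_of_Zn lam_additive_left]
    additive_on_uminus[OF subgroup_of_Zn lam_additive_left]
    additive_on_zero[OF subgroup_of_Zn lam_additive_left]
  by blast+

lemma lam_add_right [simp]:
    "x \<in> Zn n \<Longrightarrow> y \<in> Zn n \<Longrightarrow> z \<in> Zn n \<Longrightarrow> lam z (x + y) = lam z x + lam z y"
  and lam_diff_right [simp]:
    "x \<in> Zn n \<Longrightarrow> y \<in> Zn n \<Longrightarrow> z \<in> Zn n \<Longrightarrow> lam z (x - y) = lam z x - lam z y"
  and lam_zero_right [simp]: "z \<in> Zn n \<Longrightarrow> lam z 0 = 0"
  using additive_on_add[OF lam_additive_right] additive_on_diff[OF subgroup_of_Zn lam_additive_right]
    additive_on_zero[OF subgroup_of_Zn lam_additive_right]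
  by blast+

lemma lam_sum_zsmul_left:
  assumes w: "\<And>i. i \<in> I \<Longrightarrow> w i \<in> Zn n" and y: "y \<in> Zn n"
  shows "lam (\<Sum>i\<in>I. zsmul (c i) (w i)) y = (\<Sum>i\<in>I. c i * lam (w i) y)"
proof -
  have "lam (\<Sum>i\<in>I. zsmul (c i) (w i)) y = (\<Sum>i\<in>I. lam (zsmul (c i) (w i)) y)"
    by (rule additive_on_sum[OF subgroup_of_Zn lam_additive_left[OF y]]) (simp add: w)
  also have "\<dots> = (\<Sum>i\<in>I. c i * lam (w i) y)"
    using additive_on_zsmul[OF subgroup_of_Zn lam_additive_left[OF y]] w by simp
  finally show ?thesis .
qed

definition projL :: "(nat \<Rightarrow> int) \<Rightarrow> (nat \<Rightarrow> int)"
  where "projL x = (SOME l. l \<in> L \<and> x - l \<in> K)"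

definition projK :: "(nat \<Rightarrow> int) \<Rightarrow> (nat \<Rightarrow> int)"
  where "projK x = x - projL x"

lemma projL_in [simp]: "x \<in> Zn n \<Longrightarrow> projL x \<in> L"
  and projK_in [simp]: "x \<in> Zn n \<Longrightarrow> projK x \<in> K"
proof -
  assume "x \<in> Zn n"
  then obtain l k where "l \<in> L" "k \<in> K" "x = l + k"
    using L_plus_K by blast
  then have "\<exists>l. l \<in> L \<and> x - l \<in> K"
    by (intro exI[of _ l]) simp
  then have "projL x \<in> L \<and> projK x \<in> K"
    unfolding projK_def projL_def by (rule someI_ex)
  then show "projL x \<in> L" "projK x \<in> K" by blast+
qed

lemma projL_plus_projK: "projL x + projK x = x"
  by (simp add: projK_def)

lemma proj_unique:
  assumes "l \<in> L" "k \<in> K"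
  shows "projL (l + k) = l" "projK (l + k) = k"
proof -
  have "projL (l + k) - l \<in> L"
    using assms by (simp add: subgroup_of_diff[OF L_subgroup])
  moreover have "projL (l + k) - l = k - projK (l + k)"
    by (simp add: projK_def algebra_simps)
  moreover have "k - projK (l + k) \<in> K"
    using assms by (simp add: subgroup_of_diff[OF K_subgroup])
  ultimately have "projL (l + k) - l \<in> L \<inter> K"
    by simp
  then have "projL (l + k) = l"
    using L_inter_K by simp
  then show "projL (l + k) = l" "projK (l + k) = k"
    by (simp_all add: projK_def)
qed

lemma projL_L [simp]: "l \<in> L \<Longrightarrow> projL l = l"
  and projK_L [simp]: "l \<in> L \<Longrightarrow> projK l = 0"
  and projK_K [simp]: "k \<in> K \<Longrightarrow> projK k = k"
  using proj_unique[of _ 0] proj_unique[of 0]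
    subgroup_of_zero[OF K_subgroup] subgroup_of_zero[OF L_subgroup] by simp_all

lemma projL_add: "x \<in> Zn n \<Longrightarrow> y \<in> Zn n \<Longrightarrow> projL (x + y) = projL x + projL y"
  and projK_add: "x \<in> Zn n \<Longrightarrow> y \<in> Zn n \<Longrightarrow> projK (x + y) = projK x + projK y"
proof -
  assume "x \<in> Zn n" "y \<in> Zn n"
  moreover have "x + y = (projL x + projL y) + (projK x + projK y)"
    by (simp add: projK_def algebra_simps)
  ultimately show "projL (x + y) = projL x + projL y" "projK (x + y) = projK x + projK y"
    using proj_unique subgroup_of_add[OF L_subgroup] subgroup_of_add[OF K_subgroup] by simp_all
qed

lemma dual_basis_in_K:
  assumes "zbasis B L"
  obtains e where "\<And>b. b \<in> B \<Longrightarrow> e b \<in> K"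
    and "\<And>b b'. b \<in> B \<Longrightarrow> b' \<in> B \<Longrightarrow> lam (e b) b' = (if b = b' then 1 else 0)"
proof -
  have BL: "B \<subseteq> L"
    using assms unfolding zbasis_def by blast
  obtain \<phi> :: "(nat \<Rightarrow> int) \<Rightarrow> (nat \<Rightarrow> int) \<Rightarrow> int"
    where \<phi>_additive: "\<And>b. b \<in> B \<Longrightarrow> additive_on L (\<phi> b)"
    and \<phi>_basis: "\<And>b b'. b \<in> B \<Longrightarrow> b' \<in> B \<Longrightarrow> \<phi> b b' = (if b = b' then 1 else 0)"
    using zbasis_coordinates[OF assms L_subgroup] by blast
  have "\<exists>d. d \<in> Zn n \<and> (\<forall>y\<in>Zn n. lam d y = \<phi> b (projL y))" if "b \<in> B" for b
  proof -
    have "additive_on (Zn n) (\<lambda>y. \<phi> b (projL y))"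
      using additive_on_add[OF \<phi>_additive[OF that]] unfolding additive_on_def by (simp add: projL_add)
    then show ?thesis
      using unimodular unfolding ad_iso_def by blast
  qed
  then obtain d where d: "\<And>b. b \<in> B \<Longrightarrow> d b \<in> Zn n \<and> (\<forall>y\<in>Zn n. lam (d b) y = \<phi> b (projL y))"
    by metis
  \<comment> \<open>Since \<open>L\<close> is isotropic, dropping the \<open>L\<close>-component of \<open>d b\<close>
     keeps its pairing with \<open>L\<close>.\<close>
  show thesis
  proof (rule that[of "\<lambda>b. projK (d b)"])
    fix b b' assume "b \<in> B" "b' \<in> B"
    then have "lam (projK (d b)) b' = lam (d b) b' - lam (projL (d b)) b'"
      using d BL by (auto simp: projK_def)
    also have "\<dots> = \<phi> b b'"
      using d \<open>b \<in> B\<close> \<open>b' \<in> B\<close> BL lam_L by auto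
    finally show "lam (projK (d b)) b' = (if b = b' then 1 else 0)"
      using \<phi>_basis \<open>b \<in> B\<close> \<open>b' \<in> B\<close> by simp
  qed (use d in simp)
qed

lemma K_orthogonal_to_L_eq_0:
  assumes k: "k \<in> K" and orth: "\<And>l. l \<in> L \<Longrightarrow> lam k l = 0"
  shows "k = 0"
proof (rule ccontr)
  assume "k \<noteq> 0"
  obtain B where basis: "zbasis B L" and card_B: "2 * card B = n"
    using lagrangian unfolding lagrangian_def by blast
  then have finB: "finite B" and BL: "B \<subseteq> L"
    and indep: "\<And>c. (\<Sum>b\<in>B. zsmul (c b) b) = 0 \<Longrightarrow> \<forall>b\<in>B. c b = 0"
    unfolding zbasis_def by blast+
  obtain e where eK: "\<And>b. b \<in> B \<Longrightarrow> e b \<in> K"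
    and e_dual: "\<And>b b'. b \<in> B \<Longrightarrow> b' \<in> B \<Longrightarrow> lam (e b) b' = (if b = b' then 1 else 0)"
    using dual_basis_in_K[OF basis] by blast
  \<comment> \<open>The \<open>n + 1\<close> vectors \<open>B\<close>, \<open>e ` B\<close> and \<open>k\<close>,
     indexed by \<open>Inl b\<close>, \<open>Inr (Some b)\<close> and \<open>Inr None\<close>.\<close>
  define I :: "((nat \<Rightarrow> int) + (nat \<Rightarrow> int) option) set" where "I = B <+> insert None (Some ` B)"
  define v where "v = case_sum id (case_option k e)"
  have finI: "finite I"
    using finB by (simp add: I_def)
  have cardI: "n < card I"
    using finB card_B by (simp add: I_def card_Plus card_image)
  have vZ: "v i \<in> Zn n" if "i \<in> I" for i
    using that BL eK k by (auto simp: I_def v_def)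
  obtain c where c: "(\<Sum>i\<in>I. zsmul (c i) (v i)) = 0" "\<exists>i\<in>I. c i \<noteq> 0"
    by (rule Zn_linearly_dependent[of I n v, OF finI cardI vZ])
  define a where "a = (\<Sum>b\<in>B. zsmul (c (Inl b)) b)"
  define d where "d = (\<Sum>b\<in>B. zsmul (c (Inr (Some b))) (e b))"
  have aL: "a \<in> L"
    unfolding a_def using BL by (auto intro: subgroup_of_sum[OF L_subgroup] subgroup_of_zsmul[OF L_subgroup])
  have dZ: "d \<in> Zn n"
    unfolding d_def using eK by auto
  have kZ: "zsmul (c (Inr None)) k \<in> K"
    using k by (rule subgroup_of_zsmul[OF K_subgroup])
  have relation: "a + zsmul (c (Inr None)) k + d = 0"
    using c(1) finB
    by (simp add: I_def v_def a_def d_def sum.Plus sum.reindex comp_def add.assoc)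
  have c_dual: "c (Inr (Some b)) = 0" if b: "b \<in> B" for b
  proof -
    have bL: "b \<in> L"
      using b BL by blast
    have "0 = lam (a + zsmul (c (Inr None)) k + d) b"
      using relation bL by simp
    also have "\<dots> = lam a b + c (Inr None) * lam k b + lam d b"
      using aL kZ dZ bL k
      by (simp add: additive_on_zsmul[OF subgroup_of_Zn lam_additive_left])
    also have "lam d b = (\<Sum>b'\<in>B. c (Inr (Some b')) * (if b' = b then 1 else 0))"
      unfolding d_def using eK bL b by (simp add: lam_sum_zsmul_left e_dual)
    also have "\<dots> = c (Inr (Some b))"
      using b finB by (simp add: if_distrib cong: if_cong)
    finally show ?thesis
      using lam_L[OF aL bL] orth[OF bL] by simp
  qed
  then have "d = 0"
    by (simp add: d_def)
  then have "a = - zsmul (c (Inr None)) k"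
    using relation by (simp add: eq_neg_iff_add_eq_0)
  then have "a \<in> L \<inter> K"
    using aL kZ subgroup_of_uminus[OF K_subgroup] by auto
  then have "a = 0" and "zsmul (c (Inr None)) k = 0"
    using L_inter_K \<open>a = - zsmul (c (Inr None)) k\<close> by auto
  have "\<forall>b\<in>B. c (Inl b) = 0"
    using indep \<open>a = 0\<close> by (simp add: a_def)
  moreover have "c (Inr None) = 0"
    using \<open>zsmul (c (Inr None)) k = 0\<close> \<open>k \<noteq> 0\<close> by (auto simp: fun_eq_iff zsmul_apply)
  ultimately show False
    using c(2) c_dual by (auto simp: I_def)
qed

lemma orthogonal_to_L_imp_in_L:
  assumes x: "x \<in> Zn n" and orth: "\<And>l. l \<in> L \<Longrightarrow> lam x l = 0"
  shows "x \<in> L"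
proof -
  have "lam (projK x) l = lam x l - lam (projL x) l" if "l \<in> L" for l
    using x that by (simp add: projK_def)
  then have "projK x = 0"
    using x orth lam_L by (intro K_orthogonal_to_L_eq_0) simp_all
  then show ?thesis
    using projL_in[OF x] projL_plus_projK[of x] by simp
qed

definition corr :: "(nat \<Rightarrow> int) \<Rightarrow> (nat \<Rightarrow> int)"
  where "corr x = (THE z. z \<in> Zn n \<and> (\<forall>y\<in>Zn n. lam z y = lam (projK x) (projK y)))"

lemma corr_unique_ex:
  assumes "x \<in> Zn n"
  shows "\<exists>!z. z \<in> Zn n \<and> (\<forall>y\<in>Zn n. lam z y = lam (projK x) (projK y))"
proof -
  have "additive_on (Zn n) (\<lambda>y. lam (projK x) (projK y))"
    unfolding additive_on_def using assms by (simp add: projK_add)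
  then show ?thesis
    using unimodular unfolding ad_iso_def by blast
qed

lemma corr_Zn [simp]: "x \<in> Zn n \<Longrightarrow> corr x \<in> Zn n"
  and lam_corr: "x \<in> Zn n \<Longrightarrow> y \<in> Zn n \<Longrightarrow> lam (corr x) y = lam (projK x) (projK y)"
  unfolding corr_def using theI'[OF corr_unique_ex] by blast+

lemma corr_eqI:
  "x \<in> Zn n \<Longrightarrow> z \<in> Zn n \<Longrightarrow> (\<And>y. y \<in> Zn n \<Longrightarrow> lam z y = lam (projK x) (projK y)) \<Longrightarrow>
    corr x = z"
  unfolding corr_def by (rule the1_equality[OF corr_unique_ex]) auto

lemma corr_in_L [simp]: "x \<in> Zn n \<Longrightarrow> corr x \<in> L"
  by (rule orthogonal_to_L_imp_in_L) (simp_all add: lam_corr)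

lemma corr_add: "x \<in> Zn n \<Longrightarrow> y \<in> Zn n \<Longrightarrow> corr (x + y) = corr x + corr y"
  by (rule corr_eqI) (simp_all add: lam_corr projK_add)

lemma corr_L: "l \<in> L \<Longrightarrow> corr l = 0"
  by (rule corr_eqI) simp_all

definition flip :: "(nat \<Rightarrow> int) \<Rightarrow> (nat \<Rightarrow> int)"
  where "flip x = projL x - projK x + corr x"

lemma flip_Zn [simp]: "x \<in> Zn n \<Longrightarrow> flip x \<in> Zn n"
  by (simp add: flip_def)

lemma flip_L: "l \<in> L \<Longrightarrow> flip l = l"
  by (simp add: flip_def corr_L)

lemma flip_add: "x \<in> Zn n \<Longrightarrow> y \<in> Zn n \<Longrightarrow> flip (x + y) = flip x + flip y"
  by (simp add: flip_def projL_add projK_add corr_add algebra_simps)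

lemma proj_flip:
  assumes "x \<in> Zn n"
  shows "projL (flip x) = projL x + corr x" "projK (flip x) = - projK x"
proof -
  have flip_eq: "flip x = (projL x + corr x) + (- projK x)"
    by (simp add: flip_def algebra_simps)
  have "projL x + corr x \<in> L" "- projK x \<in> K"
    using assms subgroup_of_add[OF L_subgroup] subgroup_of_uminus[OF K_subgroup] by simp_all
  then show "projL (flip x) = projL x + corr x" "projK (flip x) = - projK x"
    unfolding flip_eq by (rule proj_unique)+
qed

lemma corr_flip: "x \<in> Zn n \<Longrightarrow> corr (flip x) = - corr x"
  by (rule corr_eqI) (simp_all add: lam_corr proj_flip)

lemma flip_flip:
  assumes "x \<in> Zn n"
  shows "flip (flip x) = x"
proof -
  have "flip (flip x) = projL (flip x) - projK (flip x) + corr (flip x)"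
    by (rule flip_def)
  also have "\<dots> = projL x + projK x"
    using assms by (simp add: proj_flip corr_flip)
  finally show ?thesis
    by (simp add: projL_plus_projK)
qed

lemma lam_flip:
  assumes x: "x \<in> Zn n" and y: "y \<in> Zn n"
  shows "lam (flip x) (flip y) = - lam x y"
proof -
  define a k g where "a = projL x" and "k = projK x" and "g = corr x"
  define a' k' g' where "a' = projL y" and "k' = projK y" and "g' = corr y"
  have L: "a \<in> L" "g \<in> L" "a' \<in> L" "g' \<in> L" and K: "k \<in> K" "k' \<in> K"
    using x y by (simp_all add: a_def k_def g_def a'_def k'_def g'_def)
  then have Z: "a \<in> Zn n" "g \<in> Zn n" "a' \<in> Zn n" "g' \<in> Zn n" "k \<in> Zn n" "k' \<in> Zn n"
    by simp_all
  have "lam g k' = lam k k'" "lam k g' = lam k k'"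
    using lam_corr[OF x, of k'] lam_corr[OF y, of k] lam_sym K Z
    by (simp_all add: g_def g'_def k_def k'_def)
  moreover have "lam k a' = lam a' k"
    using lam_sym Z by simp
  ultimately have "lam (a - k + g) (a' - k' + g') = - (lam a k' + lam a' k + lam k k')"
    using Z lam_L L by simp
  moreover have "lam (a + k) (a' + k') = lam a k' + lam a' k + lam k k'"
    using Z lam_L L lam_sym by simp
  ultimately show ?thesis
    using projL_plus_projK[of x] projL_plus_projK[of y]
    by (simp add: flip_def a_def k_def g_def a'_def k'_def g'_def)
qed

lemma mu_flip:
  assumes "x \<in> Zn n"
  shows "mu (flip x) = - mu x"
proof -
  have "mu (flip x) = mu (projL x) - mu (projK x) + mu (corr x)"
    using assms additive_on_add[OF mu_additive] additive_on_diff[OF subgroup_of_Zn mu_additive]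
    by (simp add: flip_def)
  moreover have "mu x = mu (projL x) + mu (projK x)"
    using assms additive_on_add[OF mu_additive, of "projL x" "projK x"] by (simp add: projL_plus_projK)
  ultimately show ?thesis
    using assms mu_L by simp
qed

lemma flip_iso: "eqf_iso n lam mu (\<lambda>x y. - lam x y) (\<lambda>x. - mu x) flip"
  unfolding eqf_iso_def additive_on_def
  by (auto simp: flip_add lam_flip mu_flip intro: bij_betw_byWitness[where f' = flip] flip_flip)

end

theorem mainTheorem9:
  fixes n :: nat
    and lam :: "(nat \<Rightarrow> int) \<Rightarrow> (nat \<Rightarrow> int) \<Rightarrow> int"
    and mu :: "(nat \<Rightarrow> int) \<Rightarrow> 'q::ab_group_add"
    and L :: "(nat \<Rightarrow> int) set"
  assumes "ext_quad_form n lam mu"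
    and "metabolic n lam mu"
    and "lagrangian n lam mu L"
  shows "\<exists>J. eqf_iso n lam mu (\<lambda>x y. - lam x y) (\<lambda>x. - mu x) J \<and> (\<forall>x\<in>L. J x = x)"
proof -
  obtain K where "subgroup_of K (Zn n)" "L \<inter> K = {0}" "\<forall>x\<in>Zn n. \<exists>l\<in>L. \<exists>k\<in>K. x = l + k"
    using assms(3) unfolding lagrangian_def direct_summand_def by blast
  then interpret lagrangian_complement n lam mu L K
    using assms unfolding metabolic_def by unfold_locales auto
  show ?thesis
    using flip_iso flip_L by blast
qed

end
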